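(* There exist a total pca and a nontotal pca which are isomorphic.
   Context: A partial combinatory algebra (pca) is a set $A$ with a partial binary application admitting $K,S\in A$ with $Kab=a$, $Sab{\downarrow}$, $Sabc\simeq ac(bc)$; it is total if application is everywhere defined. An applicative morphism $\gamma:A\to B$ is a function from $A$ to nonempty subsets of $B$ with some $r\in B$ such that $aa'{\downarrow}$, $b\in\gamma(a)$, $b'\in\gamma(a')$ imply $rbb'{\downarrow}$ and $rbb'\in\gamma(aa')$; composition is $(\delta\gamma)(a)=\bigcup_{b\in\gamma(a)}\delta(b)$, identities are $a\mapsto\{a\}$. Pcas $A,B$ are isomorphic if there are applicative morphisms $\gamma:A\to B$, $\delta:B\to A$ with $\delta\gamma$ and $\gamma\delta$ equal to the identity morphisms. *)

theory Defs
  imports Main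
begin

definition papp :: "('a \<Rightarrow> 'a \<Rightarrow> 'a option) \<Rightarrow> 'a option \<Rightarrow> 'a option \<Rightarrow> 'a option" where
  "papp app x y = (case x of None \<Rightarrow> None | Some a \<Rightarrow> (case y of None \<Rightarrow> None | Some b \<Rightarrow> app a b))"

definition is_pca :: "'a set \<Rightarrow> ('a \<Rightarrow> 'a \<Rightarrow> 'a option) \<Rightarrow> bool" where
  "is_pca A app \<longleftrightarrow>
     (\<forall>a\<in>A. \<forall>b\<in>A. \<forall>c. app a b = Some c \<longrightarrow> c \<in> A) \<and>
     (\<exists>K\<in>A. \<exists>S\<in>A.
        (\<forall>a\<in>A. \<forall>b\<in>A. papp app (papp app (Some K) (Some a)) (Some b) = Some a) \<and>
        (\<forall>a\<in>A. \<forall>b\<in>A. papp app (papp app (Some S) (Some a)) (Some b) \<noteq> None) \<and>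
        (\<forall>a\<in>A. \<forall>b\<in>A. \<forall>c\<in>A.
           papp app (papp app (papp app (Some S) (Some a)) (Some b)) (Some c) =
           papp app (papp app (Some a) (Some c)) (papp app (Some b) (Some c))))"

definition is_total :: "'a set \<Rightarrow> ('a \<Rightarrow> 'a \<Rightarrow> 'a option) \<Rightarrow> bool" where
  "is_total A app \<longleftrightarrow> (\<forall>a\<in>A. \<forall>b\<in>A. app a b \<noteq> None)"

definition applicative_morphism ::
  "'a set \<Rightarrow> ('a \<Rightarrow> 'a \<Rightarrow> 'a option) \<Rightarrow> 'b set \<Rightarrow> ('b \<Rightarrow> 'b \<Rightarrow> 'b option) \<Rightarrow> ('a \<Rightarrow> 'b set) \<Rightarrow> bool" where
  "applicative_morphism A appA B appB \<gamma> \<longleftrightarrow>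
     (\<forall>a\<in>A. \<gamma> a \<noteq> {} \<and> \<gamma> a \<subseteq> B) \<and>
     (\<exists>r\<in>B. \<forall>a\<in>A. \<forall>a'\<in>A. \<forall>c. appA a a' = Some c \<longrightarrow>
        (\<forall>b\<in>\<gamma> a. \<forall>b'\<in>\<gamma> a'. \<exists>d. papp appB (papp appB (Some r) (Some b)) (Some b') = Some d \<and> d \<in> \<gamma> c))"

definition comp_am :: "('b \<Rightarrow> 'c set) \<Rightarrow> ('a \<Rightarrow> 'b set) \<Rightarrow> 'a \<Rightarrow> 'c set" where
  "comp_am \<delta> \<gamma> a = (\<Union>b\<in>\<gamma> a. \<delta> b)"

definition pca_isomorphic ::
  "'a set \<Rightarrow> ('a \<Rightarrow> 'a \<Rightarrow> 'a option) \<Rightarrow> 'b set \<Rightarrow> ('b \<Rightarrow> 'b \<Rightarrow> 'b option) \<Rightarrow> bool" where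
  "pca_isomorphic A appA B appB \<longleftrightarrow>
     (\<exists>\<gamma> \<delta>. applicative_morphism A appA B appB \<gamma> \<and> applicative_morphism B appB A appA \<delta> \<and>
        (\<forall>a\<in>A. comp_am \<delta> \<gamma> a = {a}) \<and> (\<forall>b\<in>B. comp_am \<gamma> \<delta> b = {b}))"

end

theory Submission
  imports Defs "HOL-Library.Countable_Set"
begin

(* Both pcas live on one countable set of graph-model elements: sets of tokens Arr bs x,
   read as "on an argument containing the tokens bs, output x", plus a marker token Mark.
   Application ap X Y collects the outputs of X enabled by Y and never looks at Mark.
   The total pca applies by insert Mark (ap X Y); the partial one applies by ap X Y, but
   only when Mark is in it.  As neither application can detect Mark in an argument, the
   identity is an isomorphism: one element realises total application inside the partial
   pca and partial application inside the total one.  K and S are graphs of Scott continuous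
   functions; a finitely generated subalgebra is countable and is transported to nat. *)

lemma papp_Some_Some [simp]: "papp app (Some a) (Some b) = app a b"
  by (simp add: papp_def)

lemma papp_None [simp]: "papp app None y = None" "papp app x None = None"
  by (simp_all add: papp_def split: option.split)

definition app_closed :: "'a set \<Rightarrow> ('a \<Rightarrow> 'a \<Rightarrow> 'a option) \<Rightarrow> bool" where
  "app_closed A app \<longleftrightarrow> (\<forall>a\<in>A. \<forall>b\<in>A. \<forall>c. app a b = Some c \<longrightarrow> c \<in> A)"

lemma is_pca_app_closed: "is_pca A app \<Longrightarrow> app_closed A app"
  unfolding is_pca_def app_closed_def by (rule conjunct1)

lemma set_option_papp:
  assumes "app_closed A app" "set_option x \<subseteq> A" "set_option y \<subseteq> A"
  shows "set_option (papp app x y) \<subseteq> A"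
  using assms unfolding app_closed_def papp_def by (auto split: option.split)

lemma is_pcaI:
  assumes "app_closed A app" "K \<in> A" "S \<in> A"
    and "\<And>a b. a \<in> A \<Longrightarrow> b \<in> A \<Longrightarrow> papp app (papp app (Some K) (Some a)) (Some b) = Some a"
    and "\<And>a b. a \<in> A \<Longrightarrow> b \<in> A \<Longrightarrow> papp app (papp app (Some S) (Some a)) (Some b) \<noteq> None"
    and "\<And>a b c. a \<in> A \<Longrightarrow> b \<in> A \<Longrightarrow> c \<in> A \<Longrightarrow>
      papp app (papp app (papp app (Some S) (Some a)) (Some b)) (Some c) =
      papp app (papp app (Some a) (Some c)) (papp app (Some b) (Some c))"
  shows "is_pca A app"
  unfolding is_pca_def app_closed_def[symmetric] using assms by blast

lemma applicative_morphism_singleton: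
  assumes "r \<in> A"
    and "\<And>a b c. a \<in> A \<Longrightarrow> b \<in> A \<Longrightarrow> app a b = Some c \<Longrightarrow>
      papp app' (papp app' (Some r) (Some a)) (Some b) = Some c"
  shows "applicative_morphism A app A app' (\<lambda>a. {a})"
  unfolding applicative_morphism_def using assms by auto

lemma pca_isomorphic_singleton:
  assumes "applicative_morphism A app A app' (\<lambda>a. {a})" "applicative_morphism A app' A app (\<lambda>a. {a})"
  shows "pca_isomorphic A app A app'"
  unfolding pca_isomorphic_def comp_am_def using assms by auto

section \<open>Transport along an injection\<close>

definition transfer_app ::
  "('a \<Rightarrow> 'b) \<Rightarrow> 'a set \<Rightarrow> ('a \<Rightarrow> 'a \<Rightarrow> 'a option) \<Rightarrow> 'b \<Rightarrow> 'b \<Rightarrow> 'b option" where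
  "transfer_app f A app y y' = map_option f (app (inv_into A f y) (inv_into A f y'))"

lemma transfer_app_image:
  "inj_on f A \<Longrightarrow> a \<in> A \<Longrightarrow> a' \<in> A \<Longrightarrow> transfer_app f A app (f a) (f a') = map_option f (app a a')"
  by (simp add: transfer_app_def)

lemma papp_transfer_app:
  assumes "inj_on f A" "set_option x \<subseteq> A" "set_option y \<subseteq> A"
  shows "papp (transfer_app f A app) (map_option f x) (map_option f y) = map_option f (papp app x y)"
  using assms by (cases x; cases y) (simp_all add: transfer_app_image)

lemma map_option_inj_on_eq:
  assumes "inj_on f A" "set_option x \<subseteq> A" "set_option y \<subseteq> A"
  shows "map_option f x = map_option f y \<longleftrightarrow> x = y"
  using assms by (cases x; cases y) (auto dest: inj_onD)

lemma app_closed_transfer_app: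
  assumes f: "inj_on f A" and cl: "app_closed A app"
  shows "app_closed (f ` A) (transfer_app f A app)"
  unfolding app_closed_def ball_simps(9)
proof (intro ballI allI impI)
  fix a b c assume "a \<in> A" "b \<in> A" "transfer_app f A app (f a) (f b) = Some c"
  then obtain d where "app a b = Some d" "c = f d"
    by (auto simp: transfer_app_image[OF f])
  with cl \<open>a \<in> A\<close> \<open>b \<in> A\<close> show "c \<in> f ` A"
    unfolding app_closed_def by blast
qed

lemma papp_papp_transfer_app:
  assumes f: "inj_on f A" and cl: "app_closed A app" and "a \<in> A" "b \<in> A" "c \<in> A"
  shows "papp (transfer_app f A app) (papp (transfer_app f A app) (Some (f a)) (Some (f b)))
      (Some (f c)) = map_option f (papp app (papp app (Some a) (Some b)) (Some c))"
proof -
  \<comment> \<open>Written with map_option, every argument has the shape papp_transfer_app pushes f through.\<close>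
  have Some_f: "Some (f x) = map_option f (Some x)" for x
    by simp
  show ?thesis
    unfolding Some_f using assms(3-5)
    by (simp only: papp_transfer_app[OF f] set_option_papp[OF cl] option.set insert_subset
        empty_subsetI simp_thms)
qed

lemma is_pca_transfer_app:
  assumes f: "inj_on f A" and pca: "is_pca A app"
  shows "is_pca (f ` A) (transfer_app f A app)"
proof -
  have cl: "app_closed A app"
    using pca by (rule is_pca_app_closed)
  obtain K S where KS: "K \<in> A" "S \<in> A"
    "\<forall>a\<in>A. \<forall>b\<in>A. papp app (papp app (Some K) (Some a)) (Some b) = Some a"
    "\<forall>a\<in>A. \<forall>b\<in>A. papp app (papp app (Some S) (Some a)) (Some b) \<noteq> None"
    "\<forall>a\<in>A. \<forall>b\<in>A. \<forall>c\<in>A. papp app (papp app (papp app (Some S) (Some a)) (Some b)) (Some c) =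
       papp app (papp app (Some a) (Some c)) (papp app (Some b) (Some c))"
    using pca unfolding is_pca_def by (elim conjE bexE) assumption
  have Some_f: "Some (f x) = map_option f (Some x)" for x
    by simp
  define T where "T = transfer_app f A app"
  have "\<forall>a\<in>A. \<forall>b\<in>A. papp T (papp T (Some (f K)) (Some (f a))) (Some (f b)) = Some (f a)"
    "\<forall>a\<in>A. \<forall>b\<in>A. papp T (papp T (Some (f S)) (Some (f a))) (Some (f b)) \<noteq> None"
    "\<forall>a\<in>A. \<forall>b\<in>A. \<forall>c\<in>A.
       papp T (papp T (papp T (Some (f S)) (Some (f a))) (Some (f b))) (Some (f c)) =
       papp T (papp T (Some (f a)) (Some (f c))) (papp T (Some (f b)) (Some (f c)))"
    using KS unfolding T_def Some_f
    by (simp_all only: papp_transfer_app[OF f] map_option_inj_on_eq[OF f] set_option_papp[OF cl]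
        option.set insert_subset empty_subsetI simp_thms option.map_disc_iff cong: ball_cong) simp_all
  then show ?thesis
    unfolding T_def
    by (intro is_pcaI[OF app_closed_transfer_app[OF f cl] imageI[OF KS(1)] imageI[OF KS(2)]]) auto
qed

lemma is_total_transfer_app:
  "inj_on f A \<Longrightarrow> is_total (f ` A) (transfer_app f A app) \<longleftrightarrow> is_total A app"
  by (simp add: is_total_def transfer_app_image)

definition transfer_am :: "('a \<Rightarrow> 'c) \<Rightarrow> 'a set \<Rightarrow> ('b \<Rightarrow> 'd) \<Rightarrow> ('a \<Rightarrow> 'b set) \<Rightarrow> 'c \<Rightarrow> 'd set" where
  "transfer_am f A g \<gamma> y = g ` \<gamma> (inv_into A f y)"

lemma transfer_am_image: "inj_on f A \<Longrightarrow> a \<in> A \<Longrightarrow> transfer_am f A g \<gamma> (f a) = g ` \<gamma> a"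
  by (simp add: transfer_am_def)

lemma applicative_morphism_transfer_am:
  assumes f: "inj_on f A" and g: "inj_on g B"
    and clA: "app_closed A appA" and clB: "app_closed B appB"
    and \<gamma>: "applicative_morphism A appA B appB \<gamma>"
  shows "applicative_morphism (f ` A) (transfer_app f A appA) (g ` B) (transfer_app g B appB)
    (transfer_am f A g \<gamma>)"
proof -
  have \<gamma>B: "\<gamma> a \<noteq> {}" "\<gamma> a \<subseteq> B" if "a \<in> A" for a
    using \<gamma> that by (simp_all add: applicative_morphism_def)
  obtain r where r: "r \<in> B" and realizes: "\<And>a a' c b b'.
      a \<in> A \<Longrightarrow> a' \<in> A \<Longrightarrow> appA a a' = Some c \<Longrightarrow> b \<in> \<gamma> a \<Longrightarrow> b' \<in> \<gamma> a' \<Longrightarrow>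
      \<exists>d. papp appB (papp appB (Some r) (Some b)) (Some b') = Some d \<and> d \<in> \<gamma> c"
    using \<gamma> unfolding applicative_morphism_def by metis
  have "\<exists>d. papp (transfer_app g B appB) (papp (transfer_app g B appB) (Some (g r)) (Some z))
      (Some z') = Some d \<and> d \<in> transfer_am f A g \<gamma> e"
    if hyps: "y \<in> f ` A" "y' \<in> f ` A" "transfer_app f A appA y y' = Some e"
      "z \<in> transfer_am f A g \<gamma> y" "z' \<in> transfer_am f A g \<gamma> y'" for y y' e z z'
  proof -
    obtain a a' b b' where "a \<in> A" "a' \<in> A" "y = f a" "y' = f a'" "b \<in> \<gamma> a" "b' \<in> \<gamma> a'"
      "z = g b" "z' = g b'"
      using hyps(1,2,4,5) by (auto simp: transfer_am_image[OF f])
    moreover obtain c where c: "appA a a' = Some c" "e = f c"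
      using hyps(3) calculation(1-4) by (auto simp: transfer_app_image[OF f])
    moreover have "c \<in> A"
      using clA c(1) calculation(1,2) unfolding app_closed_def by blast
    moreover obtain d where d: "papp appB (papp appB (Some r) (Some b)) (Some b') = Some d" "d \<in> \<gamma> c"
      using realizes calculation(1,2,5,6) c(1) by blast
    moreover have "b \<in> B" "b' \<in> B"
      using \<gamma>B calculation(1,2,5,6) by blast+
    ultimately have "papp (transfer_app g B appB)
        (papp (transfer_app g B appB) (Some (g r)) (Some z)) (Some z') = Some (g d)"
      using papp_papp_transfer_app[OF g clB r] by simp
    then show ?thesis
      using d(2) \<open>c \<in> A\<close> \<open>e = f c\<close> by (auto simp: transfer_am_image[OF f])
  qed
  moreover have "transfer_am f A g \<gamma> y \<noteq> {} \<and> transfer_am f A g \<gamma> y \<subseteq> g ` B" if y: "y \<in> f ` A" for y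
  proof -
    obtain a where "a \<in> A" "y = f a"
      using y by blast
    then show ?thesis
      using \<gamma>B[OF \<open>a \<in> A\<close>] by (simp add: transfer_am_image[OF f] image_mono)
  qed
  ultimately show ?thesis
    unfolding applicative_morphism_def by (meson imageI r)
qed

lemma comp_am_transfer_am:
  assumes "inj_on f A" "inj_on g B" "a \<in> A" "\<gamma> a \<subseteq> B"
  shows "comp_am (transfer_am g B f \<delta>) (transfer_am f A g \<gamma>) (f a) = f ` comp_am \<delta> \<gamma> a"
  using assms by (auto simp: comp_am_def transfer_am_def subset_iff)

lemma pca_isomorphic_transfer_app:
  assumes f: "inj_on f A" and g: "inj_on g B"
    and clA: "app_closed A appA" and clB: "app_closed B appB"
    and iso: "pca_isomorphic A appA B appB"
  shows "pca_isomorphic (f ` A) (transfer_app f A appA) (g ` B) (transfer_app g B appB)"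
proof -
  obtain \<gamma> \<delta> where \<gamma>: "applicative_morphism A appA B appB \<gamma>"
    and \<delta>: "applicative_morphism B appB A appA \<delta>"
    and \<delta>\<gamma>: "\<forall>a\<in>A. comp_am \<delta> \<gamma> a = {a}" and \<gamma>\<delta>: "\<forall>b\<in>B. comp_am \<gamma> \<delta> b = {b}"
    using iso unfolding pca_isomorphic_def by blast
  have "\<forall>y\<in>f ` A. comp_am (transfer_am g B f \<delta>) (transfer_am f A g \<gamma>) y = {y}"
    using \<delta>\<gamma> \<gamma> by (auto simp: comp_am_transfer_am[OF f g] applicative_morphism_def)
  moreover have "\<forall>z\<in>g ` B. comp_am (transfer_am f A g \<gamma>) (transfer_am g B f \<delta>) z = {z}"
    using \<gamma>\<delta> \<delta> by (auto simp: comp_am_transfer_am[OF g f] applicative_morphism_def)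
  ultimately show ?thesis
    unfolding pca_isomorphic_def
    using applicative_morphism_transfer_am[OF f g clA clB \<gamma>]
      applicative_morphism_transfer_am[OF g f clB clA \<delta>]
    by blast
qed

section \<open>Countable closure under a binary operation\<close>

inductive_set closure_under :: "('a \<Rightarrow> 'a \<Rightarrow> 'a) \<Rightarrow> 'a set \<Rightarrow> 'a set" for f G where
  generator: "x \<in> G \<Longrightarrow> x \<in> closure_under f G"
| combine: "x \<in> closure_under f G \<Longrightarrow> y \<in> closure_under f G \<Longrightarrow> f x y \<in> closure_under f G"

lemma countable_closure_under:
  assumes "countable G"
  shows "countable (closure_under f G)"
proof -
  define L where "L n = ((\<lambda>S. S \<union> case_prod f ` (S \<times> S)) ^^ n) G" for n
  have L_Suc: "L (Suc n) = L n \<union> case_prod f ` (L n \<times> L n)" for n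
    by (simp add: L_def)
  have L_mono: "L i \<subseteq> L j" if "i \<le> j" for i j
    using lift_Suc_mono_le[of L, OF _ that] by (auto simp: L_Suc)
  have L_countable: "countable (L n)" for n
    by (induction n) (simp_all add: L_Suc, simp add: L_def assms)
  have "closure_under f G \<subseteq> (\<Union>n. L n)"
  proof
    fix x assume "x \<in> closure_under f G"
    then show "x \<in> (\<Union>n. L n)"
    proof induction
      case (generator x)
      then have "x \<in> L 0" by (simp add: L_def)
      then show ?case by blast
    next
      case (combine x y)
      then obtain m n where "x \<in> L m" "y \<in> L n" by blast
      moreover have "L m \<subseteq> L (max m n)" "L n \<subseteq> L (max m n)"
        by (simp_all add: L_mono)
      ultimately have "f x y \<in> L (Suc (max m n))"
        unfolding L_Suc by blast
      then show ?case by blast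
    qed
  qed
  moreover have "countable (\<Union>n. L n)"
    by (simp add: L_countable)
  ultimately show ?thesis
    by (rule countable_subset)
qed

section \<open>A graph model with a definedness marker\<close>

(* Arr bs x: given the tokens bs, output x.  Mark is no input/output token but records
   that an application is defined. *)
datatype token = Mark | Arr "token list" token

definition ap :: "token set \<Rightarrow> token set \<Rightarrow> token set" where
  "ap X Y = {x. \<exists>\<beta>. Arr \<beta> x \<in> X \<and> set \<beta> \<subseteq> Y - {Mark}}"

lemma ap_mono: "X \<subseteq> X' \<Longrightarrow> Y \<subseteq> Y' \<Longrightarrow> ap X Y \<subseteq> ap X' Y'"
  unfolding ap_def by blast

lemma ap_insert_Mark [simp]: "ap (insert Mark X) Y = ap X Y" "ap X (insert Mark Y) = ap X Y"
  unfolding ap_def by auto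

lemma ap_insert_Arr_Nil [simp]: "ap (insert (Arr [] x) X) Y = insert x (ap X Y)"
proof
  show "ap (insert (Arr [] x) X) Y \<subseteq> insert x (ap X Y)"
    unfolding ap_def by blast
  have "x \<in> ap (insert (Arr [] x) X) Y"
    unfolding ap_def by (auto intro!: exI[of _ "[]"])
  then show "insert x (ap X Y) \<subseteq> ap (insert (Arr [] x) X) Y"
    using ap_mono[of X "insert (Arr [] x) X" Y Y] by blast
qed

(* Scott continuity of a membership predicate, with Mark invisible in the arguments. *)
definition finitary :: "(token set \<Rightarrow> token set \<Rightarrow> token set \<Rightarrow> bool) \<Rightarrow> bool" where
  "finitary P \<longleftrightarrow> (\<forall>X Y Z. P X Y Z \<longleftrightarrow> (\<exists>X0 Y0 Z0. finite X0 \<and> finite Y0 \<and> finite Z0 \<and>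
     X0 \<subseteq> X - {Mark} \<and> Y0 \<subseteq> Y - {Mark} \<and> Z0 \<subseteq> Z - {Mark} \<and> P X0 Y0 Z0))"

lemma finitaryD:
  assumes "finitary P"
  shows "P X Y Z \<longleftrightarrow> (\<exists>X0 Y0 Z0. finite X0 \<and> finite Y0 \<and> finite Z0 \<and>
     X0 \<subseteq> X - {Mark} \<and> Y0 \<subseteq> Y - {Mark} \<and> Z0 \<subseteq> Z - {Mark} \<and> P X0 Y0 Z0)"
  using assms unfolding finitary_def by (elim allE)

lemma finitary_mono:
  assumes P: "finitary P" and "P X Y Z" "X \<subseteq> X'" "Y \<subseteq> Y'" "Z \<subseteq> Z'"
  shows "P X' Y' Z'"
proof -
  obtain X0 Y0 Z0 where "finite X0" "finite Y0" "finite Z0"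
    "X0 \<subseteq> X - {Mark}" "Y0 \<subseteq> Y - {Mark}" "Z0 \<subseteq> Z - {Mark}" "P X0 Y0 Z0"
    using \<open>P X Y Z\<close> unfolding finitaryD[OF P, of X] by (elim exE conjE)
  with assms(3-5) show ?thesis
    unfolding finitaryD[OF P, of X'] by (intro exI[of _ X0] exI[of _ Y0] exI[of _ Z0]) auto
qed

lemma finitary_const: "finitary (\<lambda>X Y Z. c)"
  unfolding finitary_def by blast

lemma finitary_conj:
  assumes P: "finitary P" and Q: "finitary Q"
  shows "finitary (\<lambda>X Y Z. P X Y Z \<and> Q X Y Z)"
  unfolding finitary_def
proof (intro allI iffI)
  fix X Y Z assume "P X Y Z \<and> Q X Y Z"
  then have "P X Y Z" "Q X Y Z" by blast+
  obtain X1 Y1 Z1 where 1: "finite X1" "finite Y1" "finite Z1"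
    "X1 \<subseteq> X - {Mark}" "Y1 \<subseteq> Y - {Mark}" "Z1 \<subseteq> Z - {Mark}" "P X1 Y1 Z1"
    using \<open>P X Y Z\<close> unfolding finitaryD[OF P, of X] by (elim exE conjE)
  obtain X2 Y2 Z2 where 2: "finite X2" "finite Y2" "finite Z2"
    "X2 \<subseteq> X - {Mark}" "Y2 \<subseteq> Y - {Mark}" "Z2 \<subseteq> Z - {Mark}" "Q X2 Y2 Z2"
    using \<open>Q X Y Z\<close> unfolding finitaryD[OF Q, of X] by (elim exE conjE)
  have "P (X1 \<union> X2) (Y1 \<union> Y2) (Z1 \<union> Z2)" "Q (X1 \<union> X2) (Y1 \<union> Y2) (Z1 \<union> Z2)"
    by (rule finitary_mono[OF P \<open>P X1 Y1 Z1\<close> Un_upper1 Un_upper1 Un_upper1],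
        rule finitary_mono[OF Q \<open>Q X2 Y2 Z2\<close> Un_upper2 Un_upper2 Un_upper2])
  with 1 2 show "\<exists>X0 Y0 Z0. finite X0 \<and> finite Y0 \<and> finite Z0 \<and> X0 \<subseteq> X - {Mark} \<and>
      Y0 \<subseteq> Y - {Mark} \<and> Z0 \<subseteq> Z - {Mark} \<and> P X0 Y0 Z0 \<and> Q X0 Y0 Z0"
    by (intro exI[of _ "X1 \<union> X2"] exI[of _ "Y1 \<union> Y2"] exI[of _ "Z1 \<union> Z2"]) simp
next
  fix X Y Z
  assume "\<exists>X0 Y0 Z0. finite X0 \<and> finite Y0 \<and> finite Z0 \<and> X0 \<subseteq> X - {Mark} \<and>
      Y0 \<subseteq> Y - {Mark} \<and> Z0 \<subseteq> Z - {Mark} \<and> P X0 Y0 Z0 \<and> Q X0 Y0 Z0"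
  then obtain X0 Y0 Z0 where "X0 \<subseteq> X" "Y0 \<subseteq> Y" "Z0 \<subseteq> Z" "P X0 Y0 Z0" "Q X0 Y0 Z0"
    by (elim exE conjE) (meson Diff_subset order_trans)
  then show "P X Y Z \<and> Q X Y Z"
    using finitary_mono[OF P] finitary_mono[OF Q] by simp
qed

lemma finitary_Ball:
  assumes "finite B" "\<And>b. b \<in> B \<Longrightarrow> finitary (P b)"
  shows "finitary (\<lambda>X Y Z. \<forall>b\<in>B. P b X Y Z)"
  using assms by (induction B rule: finite_induct) (simp_all add: finitary_const finitary_conj)

lemma finitary_Ex:
  assumes "\<And>b. finitary (P b)"
  shows "finitary (\<lambda>X Y Z. \<exists>b. P b X Y Z)"
  unfolding finitary_def using finitaryD[OF assms] by meson

lemma finitary_mem: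
  assumes "y \<noteq> Mark"
  shows "finitary (\<lambda>X Y Z. y \<in> X)" "finitary (\<lambda>X Y Z. y \<in> Y)" "finitary (\<lambda>X Y Z. y \<in> Z)"
proof -
  show "finitary (\<lambda>X Y Z. y \<in> X)"
    unfolding finitary_def
    by (intro allI iffI, rule exI[of _ "{y}"], rule exI[of _ "{}"], rule exI[of _ "{}"]) (use assms in auto)
  show "finitary (\<lambda>X Y Z. y \<in> Y)"
    unfolding finitary_def
    by (intro allI iffI, rule exI[of _ "{}"], rule exI[of _ "{y}"], rule exI[of _ "{}"]) (use assms in auto)
  show "finitary (\<lambda>X Y Z. y \<in> Z)"
    unfolding finitary_def
    by (intro allI iffI, rule exI[of _ "{}"], rule exI[of _ "{}"], rule exI[of _ "{y}"]) (use assms in auto)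
qed

lemma finitary_ap:
  assumes G: "\<And>y. y \<noteq> Mark \<Longrightarrow> finitary (\<lambda>X Y Z. y \<in> G X Y Z)"
    and H: "\<And>y. y \<noteq> Mark \<Longrightarrow> finitary (\<lambda>X Y Z. y \<in> H X Y Z)"
  shows "finitary (\<lambda>X Y Z. x \<in> ap (G X Y Z) (H X Y Z))"
proof -
  have H': "finitary (\<lambda>X Y Z. y \<in> H X Y Z \<and> y \<noteq> Mark)" for y
    using H[of y] finitary_const[of False] by (cases "y = Mark") simp_all
  have "finitary (\<lambda>X Y Z. Arr \<beta> x \<in> G X Y Z \<and> (\<forall>y\<in>set \<beta>. y \<in> H X Y Z \<and> y \<noteq> Mark))" for \<beta>
    by (intro finitary_conj[OF G] finitary_Ball H') simp_all
  then have "finitary (\<lambda>X Y Z. \<exists>\<beta>. Arr \<beta> x \<in> G X Y Z \<and> (\<forall>y\<in>set \<beta>. y \<in> H X Y Z \<and> y \<noteq> Mark))"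
    by (rule finitary_Ex)
  then show ?thesis
    unfolding ap_def by (simp add: subset_iff Ball_def)
qed

definition code3 :: "(token set \<Rightarrow> token set \<Rightarrow> token set \<Rightarrow> token set) \<Rightarrow> token set" where
  "code3 F = {Arr as (Arr bs (Arr cs x)) | as bs cs x. x \<in> F (set as) (set bs) (set cs)}"

lemma ap_ap_ap_code3:
  assumes F: "\<And>x. finitary (\<lambda>X Y Z. x \<in> F X Y Z)"
  shows "ap (ap (ap (code3 F) X) Y) Z = F X Y Z"
proof (rule set_eqI)
  fix x
  have "x \<in> ap (ap (ap (code3 F) X) Y) Z \<longleftrightarrow> (\<exists>as bs cs. set as \<subseteq> X - {Mark} \<and> set bs \<subseteq> Y - {Mark} \<and>
      set cs \<subseteq> Z - {Mark} \<and> x \<in> F (set as) (set bs) (set cs))"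
    unfolding ap_def code3_def by auto
  also have "\<dots> \<longleftrightarrow> (\<exists>X0 Y0 Z0. finite X0 \<and> finite Y0 \<and> finite Z0 \<and>
     X0 \<subseteq> X - {Mark} \<and> Y0 \<subseteq> Y - {Mark} \<and> Z0 \<subseteq> Z - {Mark} \<and> x \<in> F X0 Y0 Z0)"
    (is "?lists \<longleftrightarrow> ?sets")
  proof
    assume ?lists
    then obtain as bs cs where lists: "set as \<subseteq> X - {Mark}" "set bs \<subseteq> Y - {Mark}" "set cs \<subseteq> Z - {Mark}"
      "x \<in> F (set as) (set bs) (set cs)"
      by (elim exE conjE)
    show ?sets
      by (rule exI[of _ "set as"], rule exI[of _ "set bs"], rule exI[of _ "set cs"]) (simp add: lists)
  next
    assume ?sets
    then obtain X0 Y0 Z0 where sets: "finite X0" "finite Y0" "finite Z0"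
      "X0 \<subseteq> X - {Mark}" "Y0 \<subseteq> Y - {Mark}" "Z0 \<subseteq> Z - {Mark}" "x \<in> F X0 Y0 Z0"
      by (elim exE conjE)
    obtain as bs cs where "set as = X0" "set bs = Y0" "set cs = Z0"
      using finite_list sets(1-3) by metis
    then show ?lists
      using sets(4-7) by blast
  qed
  also have "\<dots> \<longleftrightarrow> x \<in> F X Y Z"
    by (rule finitaryD[OF F, symmetric])
  finally show "x \<in> ap (ap (ap (code3 F) X) Y) Z \<longleftrightarrow> x \<in> F X Y Z" .
qed

definition S_fun :: "token set \<Rightarrow> token set \<Rightarrow> token set \<Rightarrow> token set" where
  "S_fun X Y Z = ap (ap X Z) (ap Y Z)"

(* In the partial pca, S x y z is defined iff x z, y z and (x z) (y z) are. *)
definition strict_S_fun :: "token set \<Rightarrow> token set \<Rightarrow> token set \<Rightarrow> token set" where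
  "strict_S_fun X Y Z =
     (if Mark \<in> ap X Z \<and> Mark \<in> ap Y Z \<and> Mark \<in> S_fun X Y Z then S_fun X Y Z else {})"

lemma finitary_S_fun: "finitary (\<lambda>X Y Z. x \<in> S_fun X Y Z)"
  unfolding S_fun_def by (intro finitary_ap finitary_mem)

lemma finitary_strict_S_fun: "finitary (\<lambda>X Y Z. x \<in> strict_S_fun X Y Z)"
proof -
  have "(\<lambda>X Y Z. x \<in> strict_S_fun X Y Z) =
      (\<lambda>X Y Z. Mark \<in> ap X Z \<and> Mark \<in> ap Y Z \<and> Mark \<in> S_fun X Y Z \<and> x \<in> S_fun X Y Z)"
    by (intro ext) (auto simp: strict_S_fun_def)
  then show ?thesis
    by (simp only:) (intro finitary_conj finitary_ap finitary_mem finitary_S_fun)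
qed

definition K_code :: "token set" where
  "K_code = {Arr [t] (Arr [] t) | t. t \<noteq> Mark}"

definition I_code :: "token set" where
  "I_code = {Arr [t] t | t. t \<noteq> Mark}"

lemma ap_ap_K_code: "ap (ap K_code X) Y = X - {Mark}"
  unfolding ap_def K_code_def by auto

lemma ap_ap_I_code: "ap (ap I_code X) Y = ap X Y"
  unfolding ap_def I_code_def by auto

(* The extra tokens only ever produce Mark, making the first two partial applications of
   pad X defined without changing the result of applying it to two arguments. *)
definition pad :: "token set \<Rightarrow> token set" where
  "pad X = insert Mark (insert (Arr [] Mark) (insert (Arr [] (Arr [] Mark)) X))"

lemma Mark_ap_pad: "Mark \<in> ap (pad X) Y"
  by (simp add: pad_def)

lemma ap_ap_pad: "ap (ap (pad X) Y) Z = insert Mark (ap (ap X Y) Z)"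
  by (simp add: pad_def)

section \<open>A total and a partial pca on the same carrier\<close>

definition total_app :: "token set \<Rightarrow> token set \<Rightarrow> token set option" where
  "total_app X Y = Some (insert Mark (ap X Y))"

definition partial_app :: "token set \<Rightarrow> token set \<Rightarrow> token set option" where
  "partial_app X Y = (if Mark \<in> ap X Y then Some (ap X Y) else None)"

lemma papp_total_app:
  "papp total_app (total_app X Y) (Some Z) = Some (insert Mark (ap (ap X Y) Z))"
  by (simp add: total_app_def)

lemma papp_partial_app_pad:
  "papp partial_app (partial_app (pad X) Y) (Some Z) = Some (insert Mark (ap (ap X Y) Z))"
  by (simp add: partial_app_def Mark_ap_pad ap_ap_pad)

definition model :: "token set set" where
  "model = closure_under (\<lambda>X Y. insert Mark (ap X Y))
     {{Mark}, pad K_code, pad I_code, pad (code3 S_fun), pad (code3 strict_S_fun)}"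

lemma countable_model: "countable model"
  unfolding model_def by (simp add: countable_closure_under)

lemma generators_model:
  "{Mark} \<in> model" "pad K_code \<in> model" "pad I_code \<in> model"
  "pad (code3 S_fun) \<in> model" "pad (code3 strict_S_fun) \<in> model"
  unfolding model_def by (simp_all add: closure_under.generator)

lemma Mark_in_model: "X \<in> model \<Longrightarrow> Mark \<in> X"
  unfolding model_def by (induction rule: closure_under.induct) (auto simp: pad_def)

lemma insert_Mark_ap_model: "X \<in> model \<Longrightarrow> Y \<in> model \<Longrightarrow> insert Mark (ap X Y) \<in> model"
  unfolding model_def by (rule closure_under.combine)

lemma app_closed_total_app: "app_closed model total_app"
  by (simp add: app_closed_def total_app_def insert_Mark_ap_model)

lemma app_closed_partial_app: "app_closed model partial_app"
  unfolding app_closed_def partial_app_def using insert_Mark_ap_model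
  by (metis insert_absorb option.inject option.distinct(1))

lemma K_code_model: "X \<in> model \<Longrightarrow> insert Mark (ap (ap K_code X) Y) = X"
  by (simp add: ap_ap_K_code Mark_in_model insert_absorb)

lemma is_pca_total_app: "is_pca model total_app"
proof (rule is_pcaI[OF app_closed_total_app generators_model(2,4)])
  fix X Y
  assume "X \<in> model"
  then show "papp total_app (papp total_app (Some (pad K_code)) (Some X)) (Some Y) = Some X"
    by (simp add: papp_total_app ap_ap_pad K_code_model Mark_in_model insert_absorb)
next
  fix X Y Z
  show "papp total_app (papp total_app (Some (pad (code3 S_fun))) (Some X)) (Some Y) \<noteq> None"
    by (simp add: papp_total_app)
  show "papp total_app
      (papp total_app (papp total_app (Some (pad (code3 S_fun))) (Some X)) (Some Y)) (Some Z) =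
    papp total_app (papp total_app (Some X) (Some Z)) (papp total_app (Some Y) (Some Z))"
    by (simp add: total_app_def ap_ap_pad ap_ap_ap_code3[OF finitary_S_fun] S_fun_def)
qed

lemma is_total_total_app: "is_total model total_app"
  by (simp add: is_total_def total_app_def)

lemma is_pca_partial_app: "is_pca model partial_app"
proof (rule is_pcaI[OF app_closed_partial_app generators_model(2,5)])
  fix X Y
  assume "X \<in> model"
  then show "papp partial_app (papp partial_app (Some (pad K_code)) (Some X)) (Some Y) = Some X"
    by (simp add: papp_partial_app_pad K_code_model Mark_in_model insert_absorb)
next
  fix X Y Z
  show "papp partial_app (papp partial_app (Some (pad (code3 strict_S_fun))) (Some X)) (Some Y) \<noteq> None"
    by (simp add: papp_partial_app_pad)
  show "papp partial_app
      (papp partial_app (papp partial_app (Some (pad (code3 strict_S_fun))) (Some X)) (Some Y)) (Some Z) =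
    papp partial_app (papp partial_app (Some X) (Some Z)) (papp partial_app (Some Y) (Some Z))"
    by (simp add: papp_partial_app_pad,
        simp add: partial_app_def ap_ap_ap_code3[OF finitary_strict_S_fun] strict_S_fun_def S_fun_def)
qed

lemma not_is_total_partial_app: "\<not> is_total model partial_app"
proof -
  have "partial_app {Mark} {Mark} = None"
    by (simp add: partial_app_def ap_def)
  then show ?thesis
    unfolding is_total_def using generators_model(1) by blast
qed

lemma pca_isomorphic_total_partial: "pca_isomorphic model total_app model partial_app"
proof (intro pca_isomorphic_singleton applicative_morphism_singleton[OF generators_model(3)])
  fix X Y C
  show "total_app X Y = Some C \<Longrightarrow>
    papp partial_app (papp partial_app (Some (pad I_code)) (Some X)) (Some Y) = Some C"
    by (simp add: papp_partial_app_pad ap_ap_I_code total_app_def)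
  show "partial_app X Y = Some C \<Longrightarrow>
    papp total_app (papp total_app (Some (pad I_code)) (Some X)) (Some Y) = Some C"
    by (auto simp: papp_total_app ap_ap_pad ap_ap_I_code partial_app_def insert_absorb split: if_splits)
qed

theorem mainTheorem7:
  shows "\<exists>(A :: nat set) appA (B :: nat set) appB.
           is_pca A appA \<and> is_total A appA \<and>
           is_pca B appB \<and> \<not> is_total B appB \<and>
           pca_isomorphic A appA B appB"
proof -
  let ?f = "to_nat_on model"
  have f: "inj_on ?f model"
    by (rule inj_on_to_nat_on[OF countable_model])
  show ?thesis
    using is_pca_transfer_app[OF f is_pca_total_app] is_pca_transfer_app[OF f is_pca_partial_app]
      is_total_total_app not_is_total_partial_app is_total_transfer_app[OF f]
      pca_isomorphic_transfer_app[OF f f app_closed_total_app app_closed_partial_app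
        pca_isomorphic_total_partial]
    by blast
qed

end
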